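(* Let $E$ be a Banach lattice and $F$ a Dedekind complete Banach lattice, and let $\mathcal{P}$ be a linear subspace of $\mathrm{L}(E,F)$ satisfying the domination property. Then the set $\mathrm{r\text{-}}\mathcal{P}(E,F)$ of r-$\mathcal{P}$-operators is an order ideal in the Dedekind complete vector lattice $\mathrm{L}_r(E,F)$ of regular operators.
   Context: All vector spaces are real; $\mathrm{L}(E,F)$ is the space of bounded linear operators, ordered by $S\le T$ iff $T-S$ is positive; $\mathrm{L}_r(E,F)$ is the space of regular operators (differences of positive operators). An operator $T:E\to F$ is an r-$\mathcal{P}$-operator if $T=T_1-T_2$ with $T_1,T_2$ positive operators belonging to $\mathcal{P}$. $\mathcal{P}$ satisfies the domination property if $0\le S\le T\in\mathcal{P}$ implies $S\in\mathcal{P}$. *)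

theory Defs
  imports "HOL-Analysis.Analysis"
begin

class banach_lattice = banach + ordered_real_vector + lattice +
  assumes lattice_norm_mono: "sup x (- x) \<le> sup y (- y) \<Longrightarrow> norm x \<le> norm y"

text \<open>Dedekind completeness of F is expressed by the sort conditionally_complete_lattice.\<close>

definition positive_op :: "('a::banach_lattice \<Rightarrow> 'b::banach_lattice) \<Rightarrow> bool" where
  "positive_op T \<longleftrightarrow> (\<forall>x. 0 \<le> x \<longrightarrow> 0 \<le> T x)"

definition op_le :: "('a::banach_lattice \<Rightarrow> 'b::banach_lattice) \<Rightarrow> ('a \<Rightarrow> 'b) \<Rightarrow> bool" where
  "op_le S T \<longleftrightarrow> positive_op (\<lambda>x. T x - S x)"

definition regular_ops :: "('a::banach_lattice \<Rightarrow> 'b::banach_lattice) set" where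
  "regular_ops = {T. \<exists>T1 T2. bounded_linear T1 \<and> bounded_linear T2 \<and>
       positive_op T1 \<and> positive_op T2 \<and> T = (\<lambda>x. T1 x - T2 x)}"

definition op_subspace :: "('a::banach_lattice \<Rightarrow> 'b::banach_lattice) set \<Rightarrow> bool" where
  "op_subspace P \<longleftrightarrow> (\<lambda>x. 0) \<in> P \<and>
     (\<forall>S\<in>P. \<forall>T\<in>P. (\<lambda>x. S x + T x) \<in> P) \<and>
     (\<forall>c. \<forall>T\<in>P. (\<lambda>x. c *\<^sub>R T x) \<in> P)"

definition domination_property :: "('a::banach_lattice \<Rightarrow> 'b::banach_lattice) set \<Rightarrow> bool" where
  "domination_property P \<longleftrightarrow>
     (\<forall>S T. bounded_linear S \<and> positive_op S \<and> op_le S T \<and> T \<in> P \<longrightarrow> S \<in> P)"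

definition r_ops :: "('a::banach_lattice \<Rightarrow> 'b::banach_lattice) set \<Rightarrow> ('a \<Rightarrow> 'b) set" where
  "r_ops P = {T. \<exists>T1 T2. T1 \<in> P \<and> T2 \<in> P \<and> positive_op T1 \<and> positive_op T2 \<and>
                 T = (\<lambda>x. T1 x - T2 x)}"

definition is_op_modulus :: "('a::banach_lattice \<Rightarrow> 'b::banach_lattice) \<Rightarrow> ('a \<Rightarrow> 'b) \<Rightarrow> bool" where
  "is_op_modulus M T \<longleftrightarrow> M \<in> regular_ops \<and> op_le T M \<and> op_le (\<lambda>x. - T x) M \<and>
     (\<forall>N\<in>regular_ops. op_le T N \<and> op_le (\<lambda>x. - T x) N \<longrightarrow> op_le M N)"

definition order_ideal_Lr :: "('a::banach_lattice \<Rightarrow> 'b::banach_lattice) set \<Rightarrow> bool" where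
  "order_ideal_Lr I \<longleftrightarrow> I \<subseteq> regular_ops \<and> op_subspace I \<and>
     (\<forall>S\<in>regular_ops. \<forall>T\<in>I. \<forall>MS MT.
        is_op_modulus MS S \<and> is_op_modulus MT T \<and> op_le MS MT \<longrightarrow> S \<in> I)"

end

theory Submission
  imports Defs
begin

text \<open>For \<open>T = T\<^sub>1 - T\<^sub>2\<close> with positive \<open>T\<^sub>1, T\<^sub>2 \<in> \<P>\<close>, the operator \<open>T\<^sub>1 + T\<^sub>2\<close> lies in \<open>\<P>\<close>
  and dominates \<open>|T|\<close>. So if \<open>|S| \<le> |T|\<close>, the domination property puts \<open>|S|\<close> into \<open>\<P>\<close>, and
  then also \<open>|S| - S\<close>, which lies between \<open>0\<close> and \<open>2|S|\<close>; hence \<open>S = |S| - (|S| - S)\<close> is an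
  r-\<open>\<P>\<close>-operator. Dedekind completeness of \<open>F\<close> only guarantees that moduli exist; solidity is
  phrased in terms of given moduli.\<close>

lemma nonneg_if_double_nonneg:
  fixes y :: "'a::ordered_real_vector"
  assumes "0 \<le> y + y"
  shows "0 \<le> y"
proof -
  have "0 \<le> (1/2::real) *\<^sub>R (y + y)"
    using assms by (rule scaleR_nonneg_nonneg[rotated]) simp
  also have "(1/2::real) *\<^sub>R (y + y) = ((1/2::real) + 1/2) *\<^sub>R y"
    by (simp only: scaleR_add_right scaleR_add_left)
  finally show ?thesis by simp
qed

lemma positive_op_add: "positive_op S \<Longrightarrow> positive_op T \<Longrightarrow> positive_op (\<lambda>x. S x + T x)"
  unfolding positive_op_def by (simp add: add_nonneg_nonneg)

lemma positive_op_scaleR: "positive_op T \<Longrightarrow> 0 \<le> c \<Longrightarrow> positive_op (\<lambda>x. c *\<^sub>R T x)"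
  unfolding positive_op_def by (simp add: scaleR_nonneg_nonneg)

lemma positive_op_zero: "positive_op (\<lambda>x. 0)"
  unfolding positive_op_def by simp

lemma op_le_trans: "op_le S T \<Longrightarrow> op_le T U \<Longrightarrow> op_le S U"
  unfolding op_le_def positive_op_def by (metis diff_ge_0_iff_ge order_trans)

lemma positive_op_if_op_le_both: "op_le T M \<Longrightarrow> op_le (\<lambda>x. - T x) M \<Longrightarrow> positive_op M"
  unfolding op_le_def positive_op_def
proof (intro allI impI)
  fix x :: 'a
  assume "\<forall>x\<ge>0. 0 \<le> M x - T x" "\<forall>x\<ge>0. 0 \<le> M x - - T x" "0 \<le> x"
  then have "0 \<le> (M x - T x) + (M x - - T x)"
    by (simp only: add_nonneg_nonneg)
  also have "(M x - T x) + (M x - - T x) = M x + M x"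
    by (simp add: algebra_simps)
  finally show "0 \<le> M x"
    by (rule nonneg_if_double_nonneg)
qed

lemma regular_ops_bounded_linear: "T \<in> regular_ops \<Longrightarrow> bounded_linear T"
  unfolding regular_ops_def using bounded_linear_sub by blast

lemma positive_bounded_linear_in_regular_ops:
  "bounded_linear T \<Longrightarrow> positive_op T \<Longrightarrow> T \<in> regular_ops"
  unfolding regular_ops_def using bounded_linear_zero positive_op_zero by fastforce

lemma op_modulus_le_sum:
  assumes "bounded_linear T\<^sub>1" "bounded_linear T\<^sub>2" "positive_op T\<^sub>1" "positive_op T\<^sub>2"
    and "is_op_modulus M (\<lambda>x. T\<^sub>1 x - T\<^sub>2 x)"
  shows "op_le M (\<lambda>x. T\<^sub>1 x + T\<^sub>2 x)"
proof -
  have "(\<lambda>x. T\<^sub>1 x + T\<^sub>2 x) \<in> regular_ops"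
    using assms(1-4) by (intro positive_bounded_linear_in_regular_ops bounded_linear_add positive_op_add)
  moreover have "op_le (\<lambda>x. T\<^sub>1 x - T\<^sub>2 x) (\<lambda>x. T\<^sub>1 x + T\<^sub>2 x)"
    and "op_le (\<lambda>x. - (T\<^sub>1 x - T\<^sub>2 x)) (\<lambda>x. T\<^sub>1 x + T\<^sub>2 x)"
    using assms(3,4) unfolding op_le_def positive_op_def by (auto simp: add_nonneg_nonneg)
  ultimately show ?thesis
    using assms(5) unfolding is_op_modulus_def by blast
qed

lemma r_ops_subset_regular_ops: "P \<subseteq> {T. bounded_linear T} \<Longrightarrow> r_ops P \<subseteq> regular_ops"
  unfolding r_ops_def regular_ops_def by blast

lemma op_subspace_r_ops:
  assumes "op_subspace P"
  shows "op_subspace (r_ops P)"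
proof -
  have zero: "(\<lambda>x. 0) \<in> P"
    and add: "\<And>S T. S \<in> P \<Longrightarrow> T \<in> P \<Longrightarrow> (\<lambda>x. S x + T x) \<in> P"
    and scale: "\<And>c T. T \<in> P \<Longrightarrow> (\<lambda>x. c *\<^sub>R T x) \<in> P"
    using assms unfolding op_subspace_def by auto
  have "(\<lambda>x. 0) \<in> r_ops P"
    unfolding r_ops_def using zero positive_op_zero by fastforce
  moreover have "(\<lambda>x. S x + T x) \<in> r_ops P" if "S \<in> r_ops P" "T \<in> r_ops P" for S T
  proof -
    obtain S\<^sub>1 S\<^sub>2 where "S\<^sub>1 \<in> P" "S\<^sub>2 \<in> P" "positive_op S\<^sub>1" "positive_op S\<^sub>2"
      "S = (\<lambda>x. S\<^sub>1 x - S\<^sub>2 x)"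
      using \<open>S \<in> r_ops P\<close> unfolding r_ops_def by blast
    moreover obtain T\<^sub>1 T\<^sub>2 where "T\<^sub>1 \<in> P" "T\<^sub>2 \<in> P" "positive_op T\<^sub>1" "positive_op T\<^sub>2"
      "T = (\<lambda>x. T\<^sub>1 x - T\<^sub>2 x)"
      using \<open>T \<in> r_ops P\<close> unfolding r_ops_def by blast
    ultimately show ?thesis
      unfolding r_ops_def
      by (intro CollectI exI[of _ "\<lambda>x. S\<^sub>1 x + T\<^sub>1 x"] exI[of _ "\<lambda>x. S\<^sub>2 x + T\<^sub>2 x"])
        (auto simp: add positive_op_add algebra_simps)
  qed
  moreover have "(\<lambda>x. c *\<^sub>R T x) \<in> r_ops P" if "T \<in> r_ops P" for c T
  proof -
    obtain T\<^sub>1 T\<^sub>2 where T: "T\<^sub>1 \<in> P" "T\<^sub>2 \<in> P" "positive_op T\<^sub>1" "positive_op T\<^sub>2"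
      "T = (\<lambda>x. T\<^sub>1 x - T\<^sub>2 x)"
      using \<open>T \<in> r_ops P\<close> unfolding r_ops_def by blast
    show ?thesis
    proof (cases "0 \<le> c")
      case True
      with T show ?thesis
        unfolding r_ops_def
        by (intro CollectI exI[of _ "\<lambda>x. c *\<^sub>R T\<^sub>1 x"] exI[of _ "\<lambda>x. c *\<^sub>R T\<^sub>2 x"])
          (auto simp: scale positive_op_scaleR algebra_simps)
    next
      case False
      then have "positive_op (\<lambda>x. (- c) *\<^sub>R T\<^sub>1 x)" "positive_op (\<lambda>x. (- c) *\<^sub>R T\<^sub>2 x)"
        using T(3,4) by (intro positive_op_scaleR; simp)+
      moreover have "(\<lambda>x. c *\<^sub>R T x) = (\<lambda>x. (- c) *\<^sub>R T\<^sub>2 x - (- c) *\<^sub>R T\<^sub>1 x)"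
        using T(5) by (simp add: algebra_simps)
      ultimately show ?thesis
        using scale[OF T(1)] scale[OF T(2)] unfolding r_ops_def by blast
    qed
  qed
  ultimately show ?thesis
    unfolding op_subspace_def by blast
qed

lemma r_ops_if_op_modulus_mem:
  assumes "op_subspace P" "domination_property P"
    and "bounded_linear S" "is_op_modulus M S" "M \<in> P"
  shows "S \<in> r_ops P"
proof -
  have M: "bounded_linear M" "op_le S M" "op_le (\<lambda>x. - S x) M"
    using assms(4) regular_ops_bounded_linear unfolding is_op_modulus_def by auto
  have "positive_op M"
    using M(2,3) by (rule positive_op_if_op_le_both)
  let ?V = "\<lambda>x. M x - S x"
  have "positive_op ?V"
    using M(2) unfolding op_le_def .
  moreover have "op_le ?V (\<lambda>x. 2 *\<^sub>R M x)"
    using M(3) unfolding op_le_def positive_op_def by (auto simp: algebra_simps scaleR_2)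
  moreover have "(\<lambda>x. 2 *\<^sub>R M x) \<in> P"
    using assms(1,5) unfolding op_subspace_def by blast
  ultimately have "?V \<in> P"
    using assms(2) M(1) assms(3) bounded_linear_sub
    unfolding domination_property_def by blast
  with \<open>M \<in> P\<close> \<open>positive_op M\<close> \<open>positive_op ?V\<close> show ?thesis
    unfolding r_ops_def by (intro CollectI exI[of _ M] exI[of _ ?V]) auto
qed

lemma op_modulus_mem_if_le_op_modulus_r_ops:
  fixes P :: "('a::banach_lattice \<Rightarrow> 'b::banach_lattice) set"
  assumes "P \<subseteq> {T. bounded_linear T}" "op_subspace P" "domination_property P"
    and "T \<in> r_ops P" "is_op_modulus M S" "is_op_modulus N T" "op_le M N"
  shows "M \<in> P"
proof -
  obtain T\<^sub>1 T\<^sub>2 where T: "T\<^sub>1 \<in> P" "T\<^sub>2 \<in> P" "positive_op T\<^sub>1" "positive_op T\<^sub>2"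
    "T = (\<lambda>x. T\<^sub>1 x - T\<^sub>2 x)"
    using \<open>T \<in> r_ops P\<close> unfolding r_ops_def by blast
  have "op_le N (\<lambda>x. T\<^sub>1 x + T\<^sub>2 x)"
    using T assms(1,6) by (intro op_modulus_le_sum) auto
  then have "op_le M (\<lambda>x. T\<^sub>1 x + T\<^sub>2 x)"
    using \<open>op_le M N\<close> op_le_trans by blast
  moreover have "(\<lambda>x. T\<^sub>1 x + T\<^sub>2 x) \<in> P" "bounded_linear M" "positive_op M"
    using T assms(2,5) positive_op_if_op_le_both regular_ops_bounded_linear
    unfolding op_subspace_def is_op_modulus_def by auto
  ultimately show ?thesis
    using assms(3) unfolding domination_property_def by blast
qed

theorem proposition3p5:
  fixes P :: "('a::banach_lattice \<Rightarrow> 'b::{banach_lattice, conditionally_complete_lattice}) set"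
  assumes "P \<subseteq> {T. bounded_linear T}"
    and "op_subspace P"
    and "domination_property P"
  shows "order_ideal_Lr (r_ops P)"
proof -
  have "S \<in> r_ops P"
    if "S \<in> regular_ops" "T \<in> r_ops P" "is_op_modulus M S" "is_op_modulus N T" "op_le M N"
    for S T M N
  proof (rule r_ops_if_op_modulus_mem)
    show "M \<in> P"
      using assms that(2-5) by (rule op_modulus_mem_if_le_op_modulus_r_ops)
  qed (use assms that(1,3) regular_ops_bounded_linear in auto)
  then show ?thesis
    using r_ops_subset_regular_ops[OF assms(1)] op_subspace_r_ops[OF assms(2)]
    unfolding order_ideal_Lr_def by blast
qed

end
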